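(* Let $G=(V,E)$ be a simple cubic bipartite graph that has no potential 4-cycles, and let $F_1$ and $F_2$ be 2-factors of $G$ such that for every cycle $C$ of $(V,F_1)$ there exists a cycle $D$ of $(V,F_2)$ with $|V(D)|\ge 10$ and $|V(C)\cap V(D)|\ge 4$. Then $(V,F_1)$ or $(V,F_2)$ has at most $|V|/8$ connected components.
   Context: A 2-factor of a graph $G=(V,E)$ is a set $F\subseteq E$ such that every node of $V$ is incident to exactly two edges of $F$; the components of $(V,F)$ are simple cycles, and for such a cycle $C$, $V(C)$ denotes its node set and its size is $|V(C)|$. A set $S$ of 4 nodes is a potential 4-cycle if some 2-factor $F$ of $G$ has a cycle in $(V,F)$ with node set exactly $S$. A graph is cubic if every node has degree exactly 3. *)

theory Defs
  imports Main
begin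

definition simple_graph :: "'a set \<Rightarrow> 'a set set \<Rightarrow> bool" where
  "simple_graph V E \<longleftrightarrow> finite V \<and> (\<forall>e\<in>E. e \<subseteq> V \<and> card e = 2)"

definition degree :: "'a set set \<Rightarrow> 'a \<Rightarrow> nat" where
  "degree E v = card {e\<in>E. v \<in> e}"

definition cubic :: "'a set \<Rightarrow> 'a set set \<Rightarrow> bool" where
  "cubic V E \<longleftrightarrow> (\<forall>v\<in>V. degree E v = 3)"

definition bipartite :: "'a set \<Rightarrow> 'a set set \<Rightarrow> bool" where
  "bipartite V E \<longleftrightarrow> (\<exists>A\<subseteq>V. \<forall>e\<in>E. card (e \<inter> A) = 1)"

definition two_factor :: "'a set \<Rightarrow> 'a set set \<Rightarrow> 'a set set \<Rightarrow> bool" where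
  "two_factor V E F \<longleftrightarrow> F \<subseteq> E \<and> (\<forall>v\<in>V. card {e\<in>F. v \<in> e} = 2)"

definition adj_rel :: "'a set \<Rightarrow> 'a set set \<Rightarrow> ('a \<times> 'a) set" where
  "adj_rel V F = {(u,v). u \<in> V \<and> v \<in> V \<and> {u,v} \<in> F}"

definition components :: "'a set \<Rightarrow> 'a set set \<Rightarrow> 'a set set" where
  "components V F = {(adj_rel V F)\<^sup>* `` {v} | v. v \<in> V}"

text \<open>Node sets of the cycles of (V,F) for a 2-factor F: these are the components.\<close>
abbreviation cycle_node_sets :: "'a set \<Rightarrow> 'a set set \<Rightarrow> 'a set set" where
  "cycle_node_sets V F \<equiv> components V F"

definition potential_4_cycle :: "'a set \<Rightarrow> 'a set set \<Rightarrow> 'a set \<Rightarrow> bool" where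
  "potential_4_cycle V E S \<longleftrightarrow> card S = 4 \<and>
     (\<exists>F. two_factor V E F \<and> S \<in> cycle_node_sets V F)"

end

theory Submission
  imports Defs
begin

text \<open>Every cycle of a 2-factor of a bipartite graph has even length, because its edges can be
  counted once at each colour class; without potential 4-cycles it therefore has at least 6 nodes.
  Send each cycle \<open>C\<close> of \<open>F\<^sub>1\<close> to a cycle \<open>D\<close> of \<open>F\<^sub>2\<close> with \<open>|D| \<ge> 10\<close> and \<open>|C \<inter> D| \<ge> 4\<close>.
  At most \<open>|D|/4\<close> cycles land on \<open>D\<close>, so \<open>8 k + 24 \<le> 4 |D|\<close> for the number \<open>k\<close> of them, also
  when \<open>k = 0\<close>. Summing over \<open>D\<close> gives \<open>8 c\<^sub>1 + 24 c\<^sub>2 \<le> 4 |V|\<close> for the numbers \<open>c\<^sub>i\<close> of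
  components, so \<open>c\<^sub>1 \<le> |V|/8\<close> or \<open>c\<^sub>2 \<le> |V|/8\<close>.\<close>

lemma equiv_reachable: "equiv V ((adj_rel V F)\<^sup>* \<inter> V \<times> V)"
proof (rule equivI)
  have "sym (adj_rel V F)"
    unfolding adj_rel_def sym_def by (auto simp: insert_commute)
  then show "sym ((adj_rel V F)\<^sup>* \<inter> V \<times> V)"
    using sym_rtrancl unfolding sym_def by blast
  show "trans ((adj_rel V F)\<^sup>* \<inter> V \<times> V)"
    by (auto intro: trans_Int simp: trans_def)
qed (auto simp: refl_on_def)

lemma reachable_in_V: "(v, x) \<in> (adj_rel V F)\<^sup>* \<Longrightarrow> v \<in> V \<Longrightarrow> x \<in> V"
  by (induction rule: rtrancl_induct) (auto simp: adj_rel_def)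

lemma components_eq_quotient: "components V F = V // ((adj_rel V F)\<^sup>* \<inter> V \<times> V)"
proof -
  have "((adj_rel V F)\<^sup>* \<inter> V \<times> V) `` {v} = (adj_rel V F)\<^sup>* `` {v}" if "v \<in> V" for v
    using that by (auto intro: reachable_in_V)
  then have "V // ((adj_rel V F)\<^sup>* \<inter> V \<times> V) = (\<lambda>v. (adj_rel V F)\<^sup>* `` {v}) ` V"
    unfolding quotient_def by (simp add: UNION_singleton_eq_range)
  then show ?thesis
    unfolding components_def by blast
qed

lemma components_subset: "D \<in> components V F \<Longrightarrow> D \<subseteq> V"
  using in_quotient_imp_subset[OF equiv_reachable] by (simp add: components_eq_quotient)

lemma Union_components: "\<Union> (components V F) = V"
  using Union_quotient[OF equiv_reachable] by (simp add: components_eq_quotient)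

lemma pairwise_disjnt_components: "pairwise disjnt (components V F)"
  using quotient_disj[OF equiv_reachable] unfolding components_eq_quotient pairwise_def disjnt_def
  by blast

lemma finite_components: "finite V \<Longrightarrow> finite (components V F)"
  unfolding components_eq_quotient by (rule finite_quotient) auto

lemma component_closed:
  assumes "D \<in> components V F" "x \<in> D" "y \<in> V" "{x, y} \<in> F"
  shows "y \<in> D"
proof -
  have "(x, y) \<in> (adj_rel V F)\<^sup>* \<inter> V \<times> V"
    using assms components_subset[OF assms(1)] by (auto simp: adj_rel_def)
  then show ?thesis
    using in_quotient_imp_closed[OF equiv_reachable] assms(1,2) by (simp add: components_eq_quotient)
qed

lemma finite_component:
  "simple_graph V E \<Longrightarrow> D \<in> components V F \<Longrightarrow> finite D"
  unfolding simple_graph_def by (metis components_subset finite_subset)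

lemma card_2_obtain_doubleton:
  assumes "card e = 2" "x \<in> e"
  obtains y where "e = {x, y}"
  using assms by (metis card_2_iff insert_commute insertE singletonD)

lemma two_factor_edge_subset_component:
  assumes "simple_graph V E" "two_factor V E F"
    and "D \<in> components V F" "x \<in> D" "e \<in> F" "x \<in> e"
  shows "e \<subseteq> D"
proof -
  have "e \<subseteq> V" "card e = 2"
    using assms(1,2,5) unfolding simple_graph_def two_factor_def by auto
  moreover obtain y where e: "e = {x, y}"
    using card_2_obtain_doubleton[OF \<open>card e = 2\<close> assms(6)] .
  ultimately have "y \<in> D"
    using component_closed[OF assms(3,4)] assms(5) by simp
  then show ?thesis
    using e assms(4) by simp
qed

text \<open>Double counting: each node of \<open>D \<inter> X\<close> lies on two \<open>F\<close>-edges, all inside \<open>D\<close>,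
  and each edge has exactly one end in \<open>X\<close>.\<close>

lemma card_component_edges_eq_twice_colour_class:
  assumes sg: "simple_graph V E" and tf: "two_factor V E F"
    and D: "D \<in> components V F" and X: "\<forall>e\<in>E. card (e \<inter> X) = 1"
  shows "2 * card (D \<inter> X) = card {e\<in>F. e \<subseteq> D}"
proof -
  let ?FD = "{e\<in>F. e \<subseteq> D}"
  have fD: "finite D"
    using finite_component[OF sg D] .
  have fFD: "finite ?FD"
    by (rule finite_subset[of _ "Pow D"]) (use fD in auto)
  have "(\<Sum>x\<in>D \<inter> X. card {e\<in>?FD. x \<in> e}) = 1 * card ?FD"
  proof (rule sum_multicount[OF _ fFD])
    show "\<forall>e\<in>?FD. card {x\<in>D \<inter> X. x \<in> e} = 1"
    proof
      fix e assume e: "e \<in> ?FD"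
      then have "{x\<in>D \<inter> X. x \<in> e} = e \<inter> X" by blast
      moreover have "e \<in> E" using e tf unfolding two_factor_def by blast
      ultimately show "card {x\<in>D \<inter> X. x \<in> e} = 1" using X by simp
    qed
  qed (use fD in simp)
  moreover have "card {e\<in>?FD. x \<in> e} = 2" if "x \<in> D \<inter> X" for x
  proof -
    have "{e\<in>?FD. x \<in> e} = {e\<in>F. x \<in> e}"
      using that two_factor_edge_subset_component[OF sg tf D] by blast
    moreover have "x \<in> V" using that components_subset[OF D] by blast
    ultimately show ?thesis
      using tf unfolding two_factor_def by simp
  qed
  ultimately show ?thesis by simp
qed

lemma two_factor_component_card_even:
  assumes "simple_graph V E" "bipartite V E" "two_factor V E F" "D \<in> components V F"
  shows "even (card D)"
proof -
  obtain A where A: "\<forall>e\<in>E. card (e \<inter> A) = 1"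
    using assms(2) unfolding bipartite_def by auto
  have "card (e \<inter> - A) = 1" if "e \<in> E" for e
  proof -
    have "card e = 2"
      using assms(1) that unfolding simple_graph_def by blast
    then have "finite e"
      by (intro card_ge_0_finite) simp
    then have "card e = card (e \<inter> A) + card (e \<inter> - A)"
      using card_Int_Diff[of e A] by (simp add: Diff_eq)
    then show ?thesis
      using A that \<open>card e = 2\<close> by simp
  qed
  then have "2 * card (D \<inter> - A) = card {e\<in>F. e \<subseteq> D}"
    by (intro card_component_edges_eq_twice_colour_class[OF assms(1,3,4)]) blast
  moreover have "2 * card (D \<inter> A) = card {e\<in>F. e \<subseteq> D}"
    using card_component_edges_eq_twice_colour_class[OF assms(1,3,4) A] .
  moreover have "card D = card (D \<inter> A) + card (D \<inter> - A)"
    using card_Int_Diff[OF finite_component[OF assms(1,4)], of A] by (simp add: Diff_eq)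
  ultimately show ?thesis by presburger
qed

lemma two_factor_component_card_ge_3:
  assumes "simple_graph V E" "two_factor V E F" "D \<in> components V F"
  shows "card D \<ge> 3"
proof (rule ccontr)
  assume small: "\<not> 3 \<le> card D"
  obtain v where v: "v \<in> V" "D = (adj_rel V F)\<^sup>* `` {v}"
    using assms(3) unfolding components_def by blast
  then have "v \<in> D" by simp
  have fD: "finite D"
    using finite_component[OF assms(1,3)] .
  have "{e\<in>F. v \<in> e} \<subseteq> {D}"
  proof
    fix e assume e: "e \<in> {e\<in>F. v \<in> e}"
    then have "e \<subseteq> D" "card e = 2"
      using two_factor_edge_subset_component[OF assms \<open>v \<in> D\<close>] assms(1,2)
      unfolding two_factor_def simple_graph_def by auto
    moreover have "card D \<le> card e"
      using small \<open>card e = 2\<close> by simp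
    ultimately show "e \<in> {D}"
      using card_seteq[OF fD] by blast
  qed
  then have "card {e\<in>F. v \<in> e} \<le> card {D}"
    by (rule card_mono[rotated]) simp
  moreover have "card {e\<in>F. v \<in> e} = 2"
    using assms(2) v(1) unfolding two_factor_def by blast
  ultimately show False by simp
qed

lemma two_factor_component_card_ge_6:
  assumes "simple_graph V E" "bipartite V E" "\<not> (\<exists>S. potential_4_cycle V E S)"
    and "two_factor V E F" "D \<in> components V F"
  shows "card D \<ge> 6"
proof -
  have "card D \<noteq> 4"
    using assms(3-5) unfolding potential_4_cycle_def by auto
  then show ?thesis
    using two_factor_component_card_even[OF assms(1,2,4,5)]
      two_factor_component_card_ge_3[OF assms(1,4,5)] by presburger
qed

lemma partition_count_bound:
  assumes V: "finite V" "\<Union> Q = V" "pairwise disjnt Q"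
    and P: "finite P" "pairwise disjnt P"
    and Q_large: "\<forall>D\<in>Q. card D \<ge> 6"
    and hit: "\<forall>C\<in>P. \<exists>D\<in>Q. card D \<ge> 10 \<and> card (C \<inter> D) \<ge> 4"
  shows "8 * card P + 24 * card Q \<le> 4 * card V"
proof -
  have fQ: "finite Q"
    using V(1,2) finite_UnionD by blast
  have fD: "finite D" if "D \<in> Q" for D
    using that V(1,2) by (metis Union_upper finite_subset)
  have "\<forall>C\<in>P. \<exists>D. D \<in> Q \<and> card D \<ge> 10 \<and> card (C \<inter> D) \<ge> 4"
    using hit by blast
  then obtain g where g: "\<forall>C\<in>P. g C \<in> Q \<and> card (g C) \<ge> 10 \<and> card (C \<inter> g C) \<ge> 4"
    by (metis bchoice)
  define fibre where "fibre D = {C\<in>P. g C = D}" for D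
  have "g ` P \<subseteq> Q"
    using g by blast
  then have card_P: "card P = (\<Sum>D\<in>Q. card (fibre D))"
    using sum.group[OF P(1) fQ, of g "\<lambda>_. 1::nat"] by (simp add: fibre_def)
  have "8 * card (fibre D) + 24 \<le> 4 * card D" if D: "D \<in> Q" for D
  proof (cases "fibre D = {}")
    case True
    then show ?thesis using Q_large D by simp
  next
    case False
    have "card (fibre D) * 4 \<le> (\<Sum>C\<in>fibre D. card (C \<inter> D))"
      using sum_bounded_below[of "fibre D" 4 "\<lambda>C. card (C \<inter> D)"] g by (auto simp: fibre_def)
    also have "\<dots> = card (\<Union>C\<in>fibre D. C \<inter> D)"
      using P fD[OF D] unfolding fibre_def pairwise_def disjnt_def
      by (intro card_UN_disjoint[symmetric]) auto
    also have "\<dots> \<le> card D"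
      using fD[OF D] by (intro card_mono) auto
    finally have "card (fibre D) * 4 \<le> card D" .
    moreover have "card D \<ge> 10"
      using False g by (auto simp: fibre_def)
    ultimately show ?thesis by presburger
  qed
  then have "(\<Sum>D\<in>Q. 8 * card (fibre D) + 24) \<le> (\<Sum>D\<in>Q. 4 * card D)"
    by (rule sum_mono)
  moreover have "card V = (\<Sum>D\<in>Q. card D)"
    using card_Union_disjoint[OF V(3) fD] V(2) by simp
  ultimately show ?thesis
    by (simp add: card_P sum.distrib sum_distrib_left)
qed

theorem lemma2:
  fixes V :: "'a set" and E F1 F2 :: "'a set set"
  assumes "simple_graph V E" and "cubic V E" and "bipartite V E"
    and "\<not> (\<exists>S. potential_4_cycle V E S)"
    and "two_factor V E F1" and "two_factor V E F2"
    and "\<forall>C\<in>cycle_node_sets V F1. \<exists>D\<in>cycle_node_sets V F2.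
           card D \<ge> 10 \<and> card (C \<inter> D) \<ge> 4"
  shows "8 * card (components V F1) \<le> card V
       \<or> 8 * card (components V F2) \<le> card V"
proof -
  have "finite V"
    using assms(1) unfolding simple_graph_def by simp
  then have "8 * card (components V F1) + 24 * card (components V F2) \<le> 4 * card V"
    using partition_count_bound[OF _ Union_components pairwise_disjnt_components
        finite_components pairwise_disjnt_components]
      two_factor_component_card_ge_6[OF assms(1,3,4,6)] assms(7)
    by blast
  then show ?thesis by linarith
qed

end
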